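(* Let $n\ge1$, $T>0$, $W(r)=\frac14(1-r^2)^2$, and for each $\varepsilon>0$ let $u_\varepsilon,\theta_\varepsilon:(0,T)\times\mathbb{R}^n\to\mathbb{R}$ with $\theta_\varepsilon(t,\cdot)\in C^1(\mathbb{R}^n)$ for all $t$, and set $g_\varepsilon:=\theta_\varepsilon\sqrt{2W(u_\varepsilon)}$. Assume $$\sup_{\varepsilon>0}\int_0^T\!\!\int_{\mathbb{R}^n}\big(\theta_\varepsilon^2+|\nabla\theta_\varepsilon|^2\big)\,dx\,dt<\infty,$$ that $u_\varepsilon$ is a classical solution of $\varepsilon\partial_tu_\varepsilon=\varepsilon\Delta u_\varepsilon-\frac1\varepsilon W'(u_\varepsilon)+g_\varepsilon$ in $(0,T)\times\mathbb{R}^n$ with $u_\varepsilon(0,\cdot)=u^0_\varepsilon$, that $\sup_{\varepsilon>0}\mu^0_\varepsilon(\mathbb{R}^n)<\infty$, and that there is a constant $K(T)$ (independent of $\varepsilon$) with $$\sup_{x\in\mathbb{R}^n,\,R>0}\frac{\mu^t_\varepsilon(B_R(x))}{R^{n-1}}\le K(T)\quad\text{for all }t\in[0,T)\text{ and all }\varepsilon>0.$$ Then $\sup_{\varepsilon>0}\int_0^T\int_{\mathbb{R}^n}\frac1\varepsilon g_\varepsilon^2\,dx\,dt<\infty$.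
   Context: $\mu_\varepsilon^t:=\big(\frac\varepsilon2|\nabla u_\varepsilon(t,\cdot)|^2+\frac1\varepsilon W(u_\varepsilon(t,\cdot))\big)\mathcal{L}^n$ on $\mathbb{R}^n$; $B_R(x)$ is the open ball of radius $R$ centered at $x$. *)

theory Defs
  imports "HOL-Analysis.Analysis"
begin

definition W :: "real \<Rightarrow> real" where
  "W r = (1 - r\<^sup>2)\<^sup>2 / 4"

definition has_pd :: "'n::finite \<Rightarrow> (real^'n \<Rightarrow> real) \<Rightarrow> real^'n \<Rightarrow> bool" where
  "has_pd i f x \<longleftrightarrow> (\<lambda>s. f (x + s *\<^sub>R axis i 1)) differentiable (at 0)"

definition pd :: "'n::finite \<Rightarrow> (real^'n \<Rightarrow> real) \<Rightarrow> real^'n \<Rightarrow> real" where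
  "pd i f x = deriv (\<lambda>s. f (x + s *\<^sub>R axis i 1)) 0"

definition grad :: "(real^'n::finite \<Rightarrow> real) \<Rightarrow> real^'n \<Rightarrow> real^'n" where
  "grad f x = (\<chi> i. pd i f x)"

definition lap :: "(real^'n::finite \<Rightarrow> real) \<Rightarrow> real^'n \<Rightarrow> real" where
  "lap f x = (\<Sum>i\<in>UNIV. pd i (pd i f) x)"

definition dt :: "(real \<Rightarrow> real^'n::finite \<Rightarrow> real) \<Rightarrow> real \<Rightarrow> real^'n \<Rightarrow> real" where
  "dt u t x = deriv (\<lambda>s. u s x) t"

text \<open>The measure mu (energy) of a set A for the profile f at parameter eps:
  integral over A of eps/2 |grad f|^2 + W(f)/eps.\<close>
definition energy :: "real \<Rightarrow> (real^'n::finite \<Rightarrow> real) \<Rightarrow> (real^'n) set \<Rightarrow> ennreal" where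
  "energy eps f A = (\<integral>\<^sup>+ y\<in>A. ennreal (eps / 2 * (norm (grad f y))\<^sup>2 + W (f y) / eps) \<partial>lborel)"

definition classical_solution ::
  "real \<Rightarrow> real \<Rightarrow> (real \<Rightarrow> real^'n::finite \<Rightarrow> real) \<Rightarrow> (real^'n \<Rightarrow> real)
     \<Rightarrow> (real \<Rightarrow> real^'n \<Rightarrow> real) \<Rightarrow> bool" where
  "classical_solution T eps u u0 g \<longleftrightarrow>
     (\<forall>t\<in>{0<..<T}. \<forall>x. (\<lambda>s. u s x) differentiable (at t) \<and>
        (\<forall>i. has_pd i (u t) x \<and> (\<forall>j. has_pd j (pd i (u t)) x))) \<and>
     continuous_on ({0<..<T} \<times> UNIV) (\<lambda>(t, x). dt u t x) \<and>
     (\<forall>i. continuous_on ({0<..<T} \<times> UNIV) (\<lambda>(t, x). pd i (u t) x)) \<and>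
     (\<forall>i j. continuous_on ({0<..<T} \<times> UNIV) (\<lambda>(t, x). pd j (pd i (u t)) x)) \<and>
     continuous_on ({0..<T} \<times> UNIV) (\<lambda>(t, x). u t x) \<and>
     (\<forall>x. u 0 x = u0 x) \<and>
     (\<forall>t\<in>{0<..<T}. \<forall>x.
        eps * dt u t x = eps * lap (u t) x - (1 / eps) * deriv W (u t x) + g t x)"

end

theory Submission
  imports Defs
begin

text \<open>Since g^2/eps = theta^2 * 2 W(u)/eps and 2 W(u)/eps dx <= 2 mu, it suffices to bound
  the integral of theta^2 rho by C K ||theta||^2_{H^1} for every density rho whose mass in any ball
  B_s is at most K s^(n-1). Average theta(y)^2 over w in B_1(y) and compare theta(y) with theta(w)
  along the path r \<mapsto> y + r^2 (w - y), 0 <= r <= 1. After Fubini, for fixed r the point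
  y + r^2 (w - y) ranges over B_{r^2}(y): the Jacobian r^(-2n), the factor r^2 from the chain rule
  and the bound K r^(2(n-1)) on the rho-mass of B_{r^2} cancel, uniformly in r.\<close>

lemma pd_eq_derivative_axis:
  fixes f :: "real^'n::finite \<Rightarrow> real"
  assumes D: "(f has_derivative D) (at x)"
  shows "pd i f x = D (axis i 1)"
proof -
  have l: "linear D" using D has_derivative_linear by blast
  have "((\<lambda>s. x + s *\<^sub>R axis i 1) has_derivative (\<lambda>s. s *\<^sub>R axis i 1)) (at 0)"
    by (auto intro!: derivative_eq_intros)
  moreover have "(f has_derivative D) (at (x + 0 *\<^sub>R axis i (1::real)))" using D by simp
  ultimately have "((\<lambda>s. f (x + s *\<^sub>R axis i 1)) has_derivative (\<lambda>s. D (s *\<^sub>R axis i 1))) (at 0)"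
    using has_derivative_compose[of "\<lambda>s. x + s *\<^sub>R axis i 1" _ 0 UNIV f D] by (simp add: o_def)
  then have "((\<lambda>s. f (x + s *\<^sub>R axis i 1)) has_real_derivative D (axis i 1)) (at 0)"
    by (simp add: has_field_derivative_def linear_scale[OF l] mult.commute[of _ "D (axis i 1)"])
  then show ?thesis unfolding pd_def by (rule DERIV_imp_deriv)
qed

lemma has_derivative_grad:
  fixes f :: "real^'n::finite \<Rightarrow> real"
  assumes "f differentiable (at x)"
  shows "(f has_derivative (\<lambda>h. grad f x \<bullet> h)) (at x)"
proof -
  obtain D where D: "(f has_derivative D) (at x)" using assms differentiable_def by blast
  have l: "linear D" using D has_derivative_linear by blast
  have "D h = grad f x \<bullet> h" for h
  proof -
    have "D h = D (\<Sum>i\<in>UNIV. h$i *\<^sub>R axis i 1)"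
      using basis_expansion[of h] by (simp add: scalar_mult_eq_scaleR)
    also have "\<dots> = (\<Sum>i\<in>UNIV. h$i * D (axis i 1))"
      by (simp add: linear_sum[OF l] linear_scale[OF l])
    also have "\<dots> = grad f x \<bullet> h"
      by (simp add: inner_vec_def grad_def pd_eq_derivative_axis[OF D] mult.commute)
    finally show ?thesis .
  qed
  then have "D = (\<lambda>h. grad f x \<bullet> h)" by auto
  then show ?thesis using D by simp
qed

lemma square_integral_le_integral_square:
  fixes h :: "real \<Rightarrow> real"
  assumes c: "continuous_on {0..1} h"
  shows "(integral {0..1} h)\<^sup>2 \<le> integral {0..1} (\<lambda>r. (h r)\<^sup>2)"
proof -
  define m where "m = integral {0..1} h"
  have ih: "h integrable_on {0..1}" using c integrable_continuous_interval by blast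
  have ih2: "(\<lambda>r. (h r)\<^sup>2) integrable_on {0..1}"
    using c by (intro integrable_continuous_interval continuous_intros)
  have "0 \<le> integral {0..1} (\<lambda>r. (h r - m)\<^sup>2)"
    using c by (intro integral_nonneg integrable_continuous_interval continuous_intros) auto
  also have "(\<lambda>r. (h r - m)\<^sup>2) = (\<lambda>r. ((h r)\<^sup>2 - 2 * m * h r) + m\<^sup>2)"
    by (rule ext) (simp add: power2_eq_square algebra_simps)
  also have "integral {0..1} \<dots> = integral {0..1} (\<lambda>r. (h r)\<^sup>2) - 2 * m * m + m\<^sup>2"
  proof (rule integral_unique)
    have "((\<lambda>r. 2 * m * h r) has_integral 2 * m * m) {0..1}"
      using ih unfolding m_def by (intro has_integral_mult_right integrable_integral)
    moreover have "((\<lambda>r. m\<^sup>2) has_integral m\<^sup>2) {0..1::real}"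
      using has_integral_const_real[of "m\<^sup>2" 0 1] by simp
    ultimately show "((\<lambda>r. ((h r)\<^sup>2 - 2 * m * h r) + m\<^sup>2) has_integral
        integral {0..1} (\<lambda>r. (h r)\<^sup>2) - 2 * m * m + m\<^sup>2) {0..1}"
      using ih2 by (intro has_integral_add has_integral_diff integrable_integral)
  qed
  finally show ?thesis by (simp add: m_def power2_eq_square)
qed

lemma square_le_gradient_path_integral:
  fixes f :: "real^'n::finite \<Rightarrow> real"
  assumes d: "\<forall>x. f differentiable (at x)" and cg: "continuous_on UNIV (grad f)"
    and dyw: "dist y w \<le> 1"
  shows "(f y)\<^sup>2 \<le> 2 * (f w)\<^sup>2
           + 2 * integral {0..1} (\<lambda>r. (2 * r * norm (grad f (y + r\<^sup>2 *\<^sub>R (w - y))))\<^sup>2)"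
proof -
  define p where "p r = y + r\<^sup>2 *\<^sub>R (w - y)" for r :: real
  define f' where "f' r = grad f (p r) \<bullet> ((2 * r) *\<^sub>R (w - y))" for r
  define h where "h r = 2 * r * norm (grad f (p r))" for r
  have pd: "(p has_vector_derivative (2 * r) *\<^sub>R (w - y)) (at r within S)" for r S
    unfolding p_def by (auto intro!: derivative_eq_intros simp: scaleR_add_right)
  have fd: "((f \<circ> p) has_vector_derivative f' r) (at r within {0..1})" for r
  proof -
    have "(f has_derivative (\<lambda>h. grad f (p r) \<bullet> h)) (at (p r) within p ` {0..1})"
      using has_derivative_grad[OF d[rule_format]] has_derivative_at_withinI by blast
    from vector_derivative_diff_chain_within[OF pd this] show ?thesis by (simp add: f'_def)
  qed
  have "(f' has_integral (f \<circ> p) 1 - (f \<circ> p) 0) {0..1}"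
    by (rule fundamental_theorem_of_calculus) (use fd in \<open>auto simp: o_def\<close>)
  then have fi: "(f' has_integral f w - f y) {0..1}" by (simp add: p_def)
  have ch: "continuous_on {0..1} h" unfolding h_def p_def
    by (intro continuous_intros continuous_on_compose2[OF cg]) auto
  have "norm (f' r) \<le> h r" if "r \<in> {0..1}" for r
  proof -
    have "norm (f' r) \<le> norm (grad f (p r)) * norm ((2 * r) *\<^sub>R (w - y))"
      unfolding f'_def real_norm_def by (rule Cauchy_Schwarz_ineq2)
    also have "\<dots> = norm (grad f (p r)) * (2 * r) * norm (w - y)" using that by simp
    also have "\<dots> \<le> norm (grad f (p r)) * (2 * r) * 1"
      using that dyw by (intro mult_left_mono) (auto simp: dist_norm norm_minus_commute)
    finally show ?thesis by (simp add: h_def mult.commute)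
  qed
  then have "norm (integral {0..1} f') \<le> integral {0..1} h"
    using fi ch integrable_continuous_interval
    by (intro Henstock_Kurzweil_Integration.integral_norm_bound_integral) auto
  then have "\<bar>f w - f y\<bar> \<le> integral {0..1} h" using fi by (simp add: integral_unique)
  then have "\<bar>f w - f y\<bar>\<^sup>2 \<le> (integral {0..1} h)\<^sup>2" by (rule power_mono) simp
  then have "(f w - f y)\<^sup>2 \<le> (integral {0..1} h)\<^sup>2" by simp
  also have "\<dots> \<le> integral {0..1} (\<lambda>r. (h r)\<^sup>2)" by (rule square_integral_le_integral_square[OF ch])
  finally have "(f w - f y)\<^sup>2 \<le> integral {0..1} (\<lambda>r. (h r)\<^sup>2)" .
  moreover have "(f y)\<^sup>2 \<le> 2 * (f w)\<^sup>2 + 2 * (f w - f y)\<^sup>2"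
    using zero_le_power2[of "2 * f w - f y"] by (simp add: power2_eq_square algebra_simps)
  ultimately show ?thesis by (simp add: h_def p_def)
qed

definition path_energy :: "(real^'n::finite \<Rightarrow> real) \<Rightarrow> real^'n \<Rightarrow> real^'n \<Rightarrow> ennreal" where
  "path_energy G y w =
     (\<integral>\<^sup>+r\<in>{0..1}. ennreal ((2 * r * G (y + r\<^sup>2 *\<^sub>R (w - y)))\<^sup>2) \<partial>lborel)"

lemma square_le_path_energy:
  fixes f :: "real^'n::finite \<Rightarrow> real"
  assumes d: "\<forall>x. f differentiable (at x)" and cg: "continuous_on UNIV (grad f)"
    and dyw: "dist y w \<le> 1"
  shows "ennreal ((f y)\<^sup>2)
           \<le> 2 * ennreal ((f w)\<^sup>2) + 2 * path_energy (\<lambda>x. norm (grad f x)) y w"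
proof -
  define h where "h = (\<lambda>r::real. (2 * r * norm (grad f (y + r\<^sup>2 *\<^sub>R (w - y))))\<^sup>2)"
  have "continuous_on {0..1} h"
    unfolding h_def by (intro continuous_intros continuous_on_compose2[OF cg]) auto
  then have hi: "(h has_integral integral {0..1} h) {0..1}"
    by (intro integrable_integral integrable_continuous_interval)
  have "path_energy (\<lambda>x. norm (grad f x)) y w = ennreal (integral {0..1} h)"
    unfolding path_energy_def h_def
    by (rule nn_integral_has_integral_lebesgue'[OF _ hi[unfolded h_def]]) simp
  moreover have "0 \<le> integral {0..1} h"
    using hi by (rule has_integral_nonneg) (simp add: h_def)
  moreover have "(f y)\<^sup>2 \<le> 2 * (f w)\<^sup>2 + 2 * integral {0..1} h"
    unfolding h_def by (rule square_le_gradient_path_integral[OF d cg dyw])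
  then have "ennreal ((f y)\<^sup>2) \<le> ennreal (2 * (f w)\<^sup>2 + 2 * integral {0..1} h)"
    by (rule ennreal_leI)
  ultimately show ?thesis by (simp add: ennreal_mult)
qed

text \<open>Unlike nn_integral_cmult this needs no measurability of f, which matters because
  nothing is assumed about the dependence of theta on t.\<close>

lemma nn_integral_cmult_le:
  assumes c: "0 \<le> c"
  shows "(\<integral>\<^sup>+x. ennreal c * f x \<partial>M) \<le> ennreal c * (\<integral>\<^sup>+x. f x \<partial>M)"
proof (cases "c = 0")
  case True then show ?thesis by simp
next
  case False
  then have cp: "c > 0" using c by simp
  show ?thesis
    unfolding nn_integral_def
  proof (rule SUP_least)
    fix g assume g: "g \<in> {g. simple_function M g \<and> g \<le> (\<lambda>x. ennreal c * f x)}"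
    define h where "h x = ennreal (1/c) * g x" for x
    have hs: "simple_function M h" unfolding h_def using g by auto
    have hf: "h \<le> f"
    proof (rule le_funI)
      fix x
      have "h x \<le> ennreal (1/c) * (ennreal c * f x)"
        unfolding h_def using g by (intro mult_left_mono) (auto simp: le_fun_def)
      also have "\<dots> = f x" using cp by (simp add: mult.assoc[symmetric] ennreal_mult[symmetric])
      finally show "h x \<le> f x" .
    qed
    have geq: "g x = ennreal c * h x" for x
      unfolding h_def using cp by (simp add: mult.assoc[symmetric] ennreal_mult[symmetric])
    have "integral\<^sup>S M g = ennreal c * integral\<^sup>S M h"
      using simple_integral_mult[OF hs, of "ennreal c"] by (simp add: geq[abs_def])
    also have "\<dots> \<le> ennreal c * (SUP g\<in>{g. simple_function M g \<and> g \<le> f}. integral\<^sup>S M g)"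
      using hs hf by (intro mult_left_mono SUP_upper) auto
    finally show "integral\<^sup>S M g \<le> ennreal c * (SUP g\<in>{g. simple_function M g \<and> g \<le> f}. integral\<^sup>S M g)" .
  qed
qed

lemma SUP_set_nn_integral_le_cmult:
  assumes "\<And>e t. e \<in> E \<Longrightarrow> t \<in> A \<Longrightarrow> f e t \<le> ennreal c * h e t" and c: "0 \<le> c"
  shows "(SUP e\<in>E. \<integral>\<^sup>+t\<in>A. f e t \<partial>M) \<le> ennreal c * (SUP e\<in>E. \<integral>\<^sup>+t\<in>A. h e t \<partial>M)"
proof (rule SUP_least)
  fix e assume e: "e \<in> E"
  have "(\<integral>\<^sup>+t\<in>A. f e t \<partial>M) \<le> (\<integral>\<^sup>+t. ennreal c * (h e t * indicator A t) \<partial>M)"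
    using assms(1) e by (intro nn_integral_mono) (auto simp: indicator_def)
  also have "\<dots> \<le> ennreal c * (\<integral>\<^sup>+t\<in>A. h e t \<partial>M)"
    using c by (rule nn_integral_cmult_le)
  also have "\<dots> \<le> ennreal c * (SUP e\<in>E. \<integral>\<^sup>+t\<in>A. h e t \<partial>M)"
    using e by (intro mult_left_mono SUP_upper) auto
  finally show "(\<integral>\<^sup>+t\<in>A. f e t \<partial>M) \<le> ennreal c * (SUP e\<in>E. \<integral>\<^sup>+t\<in>A. h e t \<partial>M)" .
qed

lemma nn_integral_ball_rescale:
  fixes F :: "real^'n::finite \<Rightarrow> ennreal"
  assumes [measurable]: "F \<in> borel_measurable borel" and s: "s > 0"
  shows "(\<integral>\<^sup>+w. indicator (ball y 1) w * F (y + s *\<^sub>R (w - y)) \<partial>lborel)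
           = ennreal (1 / s ^ CARD('n)) * (\<integral>\<^sup>+z. indicator (ball y s) z * F z \<partial>lborel)"
proof -
  define H where "H z = indicator (ball y s) z * F z" for z
  have [measurable]: "H \<in> borel_measurable borel" unfolding H_def indicator_def mem_ball by measurable
  have "H ((y - s *\<^sub>R y) + s *\<^sub>R w) = indicator (ball y 1) w * F (y + s *\<^sub>R (w - y))" for w
  proof -
    have e: "(y - s *\<^sub>R y) + s *\<^sub>R w = y + s *\<^sub>R (w - y)" by (simp add: algebra_simps)
    have "dist y (y + s *\<^sub>R (w - y)) = s * dist y w"
      using s by (simp add: dist_norm norm_minus_commute)
    then show ?thesis unfolding H_def e using s by (simp add: indicator_def)
  qed
  moreover have "(\<integral>\<^sup>+z. H z \<partial>lborel)
      = ennreal (s ^ CARD('n)) * (\<integral>\<^sup>+w. H ((y - s *\<^sub>R y) + s *\<^sub>R w) \<partial>lborel)"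
    using s by (subst lborel_affine[of s "y - s *\<^sub>R y"])
      (simp_all add: nn_integral_density nn_integral_distr nn_integral_cmult)
  ultimately show ?thesis
    using s unfolding H_def by (simp add: mult.assoc[symmetric] ennreal_mult[symmetric])
qed

definition ball_density_bound :: "real \<Rightarrow> (real^'n::finite \<Rightarrow> real) \<Rightarrow> bool" where
  "ball_density_bound K \<rho> \<longleftrightarrow> (\<forall>z. \<forall>s>0.
     (\<integral>\<^sup>+y. ennreal (\<rho> y) * indicator (ball z s) y \<partial>lborel) \<le> ennreal (K * s ^ (CARD('n) - 1)))"

lemma nn_integral_ball_average_le:
  fixes \<rho> :: "real^'n::finite \<Rightarrow> real" and a :: "real^'n \<Rightarrow> ennreal"
  assumes [measurable]: "\<rho> \<in> borel_measurable borel" "a \<in> borel_measurable borel"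
    and K: "ball_density_bound K \<rho>" and s: "s > 0"
  shows "(\<integral>\<^sup>+y. \<integral>\<^sup>+w. ennreal (\<rho> y) * indicator (ball y s) w * a w \<partial>lborel \<partial>lborel)
           \<le> ennreal (K * s ^ (CARD('n) - 1)) * (\<integral>\<^sup>+w. a w \<partial>lborel)"
proof -
  have "(\<integral>\<^sup>+y. \<integral>\<^sup>+w. ennreal (\<rho> y) * indicator (ball y s) w * a w \<partial>lborel \<partial>lborel)
      = (\<integral>\<^sup>+w. \<integral>\<^sup>+y. ennreal (\<rho> y) * indicator (ball y s) w * a w \<partial>lborel \<partial>lborel)"
    by (rule lborel_pair.Fubini'[symmetric]) (unfold indicator_def mem_ball, measurable)
  also have "\<dots> = (\<integral>\<^sup>+w. a w * (\<integral>\<^sup>+y. ennreal (\<rho> y) * indicator (ball w s) y \<partial>lborel) \<partial>lborel)"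
  proof (intro nn_integral_cong)
    fix w
    have "(\<integral>\<^sup>+y. ennreal (\<rho> y) * indicator (ball y s) w * a w \<partial>lborel)
        = (\<integral>\<^sup>+y. a w * (ennreal (\<rho> y) * indicator (ball w s) y) \<partial>lborel)"
      by (intro nn_integral_cong) (simp add: indicator_def dist_commute mult_ac)
    also have "\<dots> = a w * (\<integral>\<^sup>+y. ennreal (\<rho> y) * indicator (ball w s) y \<partial>lborel)"
      by (rule nn_integral_cmult) (unfold indicator_def mem_ball, measurable)
    finally show "(\<integral>\<^sup>+y. ennreal (\<rho> y) * indicator (ball y s) w * a w \<partial>lborel)
        = a w * (\<integral>\<^sup>+y. ennreal (\<rho> y) * indicator (ball w s) y \<partial>lborel)" .
  qed
  also have "\<dots> \<le> (\<integral>\<^sup>+w. a w * ennreal (K * s ^ (CARD('n) - 1)) \<partial>lborel)"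
    using K s unfolding ball_density_bound_def by (intro nn_integral_mono mult_left_mono) auto
  also have "\<dots> = ennreal (K * s ^ (CARD('n) - 1)) * (\<integral>\<^sup>+w. a w \<partial>lborel)"
    by (subst nn_integral_multc) (simp_all add: mult.commute)
  finally show ?thesis .
qed

lemma nn_integral_path_energy_integrand_le:
  fixes G \<rho> :: "real^'n::finite \<Rightarrow> real"
  assumes [measurable]: "G \<in> borel_measurable borel" "\<rho> \<in> borel_measurable borel"
    and K: "ball_density_bound K \<rho>" "0 \<le> K" and r: "0 < r"
  shows "(\<integral>\<^sup>+y. \<integral>\<^sup>+w. ennreal (\<rho> y) * indicator (ball y 1) w
             * ennreal ((2 * r * G (y + r\<^sup>2 *\<^sub>R (w - y)))\<^sup>2) \<partial>lborel \<partial>lborel)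
           \<le> ennreal (4 * K) * (\<integral>\<^sup>+z. ennreal ((G z)\<^sup>2) \<partial>lborel)"
proof -
  define s where "s = r\<^sup>2"
  define n where "n = CARD('n)"
  define c where "c = 4 * r\<^sup>2 / s ^ n"
  have s: "s > 0" using r by (simp add: s_def)
  have c: "c \<ge> 0" using s by (simp add: c_def)
  have scaling: "c * (K * s ^ (n - 1)) = 4 * K"
  proof -
    have "s ^ n = s * s ^ (n - 1)" unfolding n_def by (simp add: power_eq_if)
    then show ?thesis unfolding c_def s_def using r by (simp add: field_simps)
  qed
  have c_split: "ennreal c = ennreal (4 * r\<^sup>2) * ennreal (1 / s ^ n)"
    unfolding c_def using s by (simp add: ennreal_mult[symmetric])
  have cK: "ennreal c * ennreal (K * s ^ (n - 1)) = ennreal (4 * K)"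
    using scaling c K s by (simp add: ennreal_mult[symmetric])
  have inner: "(\<integral>\<^sup>+w. ennreal (\<rho> y) * indicator (ball y 1) w
        * ennreal ((2 * r * G (y + r\<^sup>2 *\<^sub>R (w - y)))\<^sup>2) \<partial>lborel)
      = ennreal c * (\<integral>\<^sup>+z. ennreal (\<rho> y) * indicator (ball y s) z * ennreal ((G z)\<^sup>2) \<partial>lborel)"
    for y
  proof -
    have "(\<integral>\<^sup>+w. ennreal (\<rho> y) * indicator (ball y 1) w
          * ennreal ((2 * r * G (y + r\<^sup>2 *\<^sub>R (w - y)))\<^sup>2) \<partial>lborel)
        = (\<integral>\<^sup>+w. (ennreal (\<rho> y) * ennreal (4 * r\<^sup>2))
          * (indicator (ball y 1) w * ennreal ((G (y + s *\<^sub>R (w - y)))\<^sup>2)) \<partial>lborel)"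
      by (intro nn_integral_cong)
        (simp add: s_def ennreal_mult[symmetric] power_mult_distrib mult_ac)
    also have "\<dots> = (ennreal (\<rho> y) * ennreal (4 * r\<^sup>2))
        * (\<integral>\<^sup>+w. indicator (ball y 1) w * ennreal ((G (y + s *\<^sub>R (w - y)))\<^sup>2) \<partial>lborel)"
      by (rule nn_integral_cmult) (unfold indicator_def mem_ball, measurable)
    also have "\<dots> = (ennreal (\<rho> y) * ennreal (4 * r\<^sup>2)) * (ennreal (1 / s ^ n)
        * (\<integral>\<^sup>+z. indicator (ball y s) z * ennreal ((G z)\<^sup>2) \<partial>lborel))"
      unfolding n_def by (subst nn_integral_ball_rescale[OF _ s]) simp_all
    also have "\<dots> = ennreal c * (ennreal (\<rho> y)
        * (\<integral>\<^sup>+z. indicator (ball y s) z * ennreal ((G z)\<^sup>2) \<partial>lborel))"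
      by (simp add: c_split mult_ac)
    also have "\<dots> = ennreal c
        * (\<integral>\<^sup>+z. ennreal (\<rho> y) * indicator (ball y s) z * ennreal ((G z)\<^sup>2) \<partial>lborel)"
      by (subst nn_integral_cmult[symmetric]) (unfold indicator_def mem_ball, measurable, simp add: mult.assoc)
    finally show ?thesis .
  qed
  have "(\<integral>\<^sup>+y. \<integral>\<^sup>+w. ennreal (\<rho> y) * indicator (ball y 1) w
          * ennreal ((2 * r * G (y + r\<^sup>2 *\<^sub>R (w - y)))\<^sup>2) \<partial>lborel \<partial>lborel)
      = ennreal c * (\<integral>\<^sup>+y. \<integral>\<^sup>+z. ennreal (\<rho> y) * indicator (ball y s) z * ennreal ((G z)\<^sup>2)
          \<partial>lborel \<partial>lborel)"
    unfolding inner
  proof (rule nn_integral_cmult)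
    have "(\<lambda>(y, z). ennreal (\<rho> y) * indicator (ball y s) z * ennreal ((G z)\<^sup>2))
        \<in> borel_measurable (lborel \<Otimes>\<^sub>M lborel)"
      unfolding indicator_def mem_ball by measurable
    then show "(\<lambda>y. \<integral>\<^sup>+z. ennreal (\<rho> y) * indicator (ball y s) z * ennreal ((G z)\<^sup>2) \<partial>lborel)
        \<in> borel_measurable lborel"
      using lborel.borel_measurable_nn_integral[of
          "\<lambda>y z. ennreal (\<rho> y) * indicator (ball y s) z * ennreal ((G z)\<^sup>2)" lborel] by simp
  qed
  also have "\<dots> \<le> ennreal c * (ennreal (K * s ^ (n - 1)) * (\<integral>\<^sup>+z. ennreal ((G z)\<^sup>2) \<partial>lborel))"
    unfolding n_def by (intro mult_left_mono nn_integral_ball_average_le K s) simp_all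
  finally show ?thesis unfolding mult.assoc[symmetric] cK .
qed

lemma measurable_path_energy[measurable]:
  fixes G :: "real^'n::finite \<Rightarrow> real"
  assumes [measurable]: "G \<in> borel_measurable borel" "f \<in> M \<rightarrow>\<^sub>M borel" "g \<in> M \<rightarrow>\<^sub>M borel"
  shows "(\<lambda>x. path_energy G (f x) (g x)) \<in> borel_measurable M"
  unfolding path_energy_def by (rule lborel.borel_measurable_nn_integral) measurable

lemma nn_integral_path_energy_le:
  fixes G \<rho> :: "real^'n::finite \<Rightarrow> real"
  assumes [measurable]: "G \<in> borel_measurable borel" "\<rho> \<in> borel_measurable borel"
    and K: "ball_density_bound K \<rho>" "0 \<le> K"
  shows "(\<integral>\<^sup>+y. \<integral>\<^sup>+w. ennreal (\<rho> y) * indicator (ball y 1) w * path_energy G y w \<partial>lborel \<partial>lborel)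
           \<le> ennreal (4 * K) * (\<integral>\<^sup>+z. ennreal ((G z)\<^sup>2) \<partial>lborel)"
proof -
  define \<Phi> where "\<Phi> y w r = ennreal (\<rho> y) * indicator (ball y 1) w
      * (ennreal ((2 * r * G (y + r\<^sup>2 *\<^sub>R (w - y)))\<^sup>2) * indicator {0..1} r)"
    for y w :: "real^'n" and r :: real
  have [measurable]: "(\<lambda>x. \<Phi> (fst (fst x)) (snd x) (snd (fst x)))
      \<in> borel_measurable ((lborel \<Otimes>\<^sub>M lborel) \<Otimes>\<^sub>M lborel)"
    unfolding \<Phi>_def indicator_def mem_ball atLeastAtMost_iff by measurable
  have "(\<integral>\<^sup>+w. ennreal (\<rho> y) * indicator (ball y 1) w * path_energy G y w \<partial>lborel)
      = (\<integral>\<^sup>+r. \<integral>\<^sup>+w. \<Phi> y w r \<partial>lborel \<partial>lborel)" for y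
  proof -
    have "(\<integral>\<^sup>+w. ennreal (\<rho> y) * indicator (ball y 1) w * path_energy G y w \<partial>lborel)
        = (\<integral>\<^sup>+w. \<integral>\<^sup>+r. \<Phi> y w r \<partial>lborel \<partial>lborel)"
      unfolding path_energy_def \<Phi>_def
      by (intro nn_integral_cong nn_integral_cmult[symmetric])
        (unfold indicator_def atLeastAtMost_iff, measurable)
    also have "\<dots> = (\<integral>\<^sup>+r. \<integral>\<^sup>+w. \<Phi> y w r \<partial>lborel \<partial>lborel)"
      by (rule lborel_pair.Fubini'[symmetric])
        (unfold \<Phi>_def indicator_def mem_ball atLeastAtMost_iff, measurable)
    finally show ?thesis .
  qed
  then have "(\<integral>\<^sup>+y. \<integral>\<^sup>+w. ennreal (\<rho> y) * indicator (ball y 1) w * path_energy G y w \<partial>lborel \<partial>lborel)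
      = (\<integral>\<^sup>+r. \<integral>\<^sup>+y. \<integral>\<^sup>+w. \<Phi> y w r \<partial>lborel \<partial>lborel \<partial>lborel)"
    by (simp add: lborel_pair.Fubini'[symmetric] split_beta')
  also have "\<dots> \<le> (\<integral>\<^sup>+r. ennreal (4 * K) * (\<integral>\<^sup>+z. ennreal ((G z)\<^sup>2) \<partial>lborel)
      * indicator {0<..(1::real)} r \<partial>lborel)"
  proof (intro nn_integral_mono)
    fix r :: real
    show "(\<integral>\<^sup>+y. \<integral>\<^sup>+w. \<Phi> y w r \<partial>lborel \<partial>lborel)
        \<le> ennreal (4 * K) * (\<integral>\<^sup>+z. ennreal ((G z)\<^sup>2) \<partial>lborel) * indicator {0<..1} r"
    proof (cases "r \<in> {0<..1}")
      case True
      then have "\<Phi> y w r = ennreal (\<rho> y) * indicator (ball y 1) w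
          * ennreal ((2 * r * G (y + r\<^sup>2 *\<^sub>R (w - y)))\<^sup>2)" for y w
        unfolding \<Phi>_def by simp
      then show ?thesis using True nn_integral_path_energy_integrand_le[of G \<rho> K r] K by simp
    next
      case False
      then have "\<Phi> y w r = 0" for y w
        unfolding \<Phi>_def by (auto simp: indicator_def)
      then show ?thesis by simp
    qed
  qed
  also have "\<dots> = ennreal (4 * K) * (\<integral>\<^sup>+z. ennreal ((G z)\<^sup>2) \<partial>lborel)"
    by (subst nn_integral_cmult_indicator) auto
  finally show ?thesis .
qed

lemma ball_density_trace_inequality:
  fixes f \<rho> :: "real^'n::finite \<Rightarrow> real"
  assumes d: "\<forall>x. f differentiable (at x)" and cg: "continuous_on UNIV (grad f)"
    and [measurable]: "\<rho> \<in> borel_measurable borel"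
    and K: "ball_density_bound K \<rho>" "0 \<le> K"
  shows "ennreal (measure lborel (ball (0::real^'n) 1)) * (\<integral>\<^sup>+y. ennreal (\<rho> y * (f y)\<^sup>2) \<partial>lborel)
           \<le> ennreal (8 * K) * (\<integral>\<^sup>+y. ennreal ((f y)\<^sup>2 + (norm (grad f y))\<^sup>2) \<partial>lborel)"
proof -
  define G where "G x = norm (grad f x)" for x
  define V where "V = measure lborel (ball (0::real^'n) 1)"
  have "continuous_on UNIV f"
    using d by (intro continuous_at_imp_continuous_on ballI differentiable_imp_continuous_within) auto
  then have [measurable]: "f \<in> borel_measurable borel"
    using borel_measurable_continuous_onI by blast
  have "continuous_on UNIV G" unfolding G_def using cg by (intro continuous_intros)
  then have [measurable]: "G \<in> borel_measurable borel"
    using borel_measurable_continuous_onI by blast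
  define A where "A y = (\<integral>\<^sup>+w. ennreal (\<rho> y) * indicator (ball y 1) w * ennreal ((f w)\<^sup>2) \<partial>lborel)"
    for y
  define B where "B y = (\<integral>\<^sup>+w. ennreal (\<rho> y) * indicator (ball y 1) w * path_energy G y w \<partial>lborel)"
    for y
  have [measurable]: "A \<in> borel_measurable lborel" "B \<in> borel_measurable lborel"
    unfolding A_def B_def by (rule lborel.borel_measurable_nn_integral,
        unfold split_beta' indicator_def mem_ball, measurable)+
  have "ennreal V * ennreal (\<rho> y * (f y)\<^sup>2) \<le> 2 * A y + 2 * B y" for y
  proof -
    have "emeasure lborel (ball y 1) = ennreal V"
      using content_ball_conv_unit_ball[of 1 y] emeasure_lborel_ball_finite[of y 1]
      by (simp add: emeasure_eq_ennreal_measure V_def)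
    then have "ennreal V * ennreal (\<rho> y * (f y)\<^sup>2)
        = (\<integral>\<^sup>+w. ennreal (\<rho> y * (f y)\<^sup>2) * indicator (ball y 1) w \<partial>lborel)"
      using nn_integral_cmult_indicator[of "ball y 1" lborel "ennreal (\<rho> y * (f y)\<^sup>2)"]
      by (simp add: mult.commute)
    also have "\<dots> \<le> (\<integral>\<^sup>+w. 2 * (ennreal (\<rho> y) * indicator (ball y 1) w * ennreal ((f w)\<^sup>2))
        + 2 * (ennreal (\<rho> y) * indicator (ball y 1) w * path_energy G y w) \<partial>lborel)"
    proof (intro nn_integral_mono)
      fix w
      show "ennreal (\<rho> y * (f y)\<^sup>2) * indicator (ball y 1) w
          \<le> 2 * (ennreal (\<rho> y) * indicator (ball y 1) w * ennreal ((f w)\<^sup>2))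
            + 2 * (ennreal (\<rho> y) * indicator (ball y 1) w * path_energy G y w)"
      proof (cases "w \<in> ball y 1")
        case True
        then have "ennreal (\<rho> y) * ennreal ((f y)\<^sup>2)
            \<le> ennreal (\<rho> y) * (2 * ennreal ((f w)\<^sup>2) + 2 * path_energy G y w)"
          using square_le_path_energy[OF d cg, of y w] unfolding G_def
          by (intro mult_left_mono) simp_all
        then show ?thesis using True by (simp add: ennreal_mult'' distrib_left mult_ac)
      qed simp
    qed
    also have "\<dots> = 2 * A y + 2 * B y"
      unfolding A_def B_def
      by (subst nn_integral_add) (unfold indicator_def mem_ball, measurable, simp add: nn_integral_cmult)
    finally show ?thesis .
  qed
  then have "ennreal V * (\<integral>\<^sup>+y. ennreal (\<rho> y * (f y)\<^sup>2) \<partial>lborel) \<le> (\<integral>\<^sup>+y. 2 * A y + 2 * B y \<partial>lborel)"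
    by (subst nn_integral_cmult[symmetric]) (measurable, intro nn_integral_mono)
  also have "\<dots> = 2 * (\<integral>\<^sup>+y. A y \<partial>lborel) + 2 * (\<integral>\<^sup>+y. B y \<partial>lborel)"
    by (simp add: nn_integral_add nn_integral_cmult)
  also have "\<dots> \<le> 2 * (ennreal K * (\<integral>\<^sup>+y. ennreal ((f y)\<^sup>2) \<partial>lborel))
      + 2 * (ennreal (4 * K) * (\<integral>\<^sup>+y. ennreal ((G y)\<^sup>2) \<partial>lborel))"
    using nn_integral_ball_average_le[of \<rho> "\<lambda>w. ennreal ((f w)\<^sup>2)" K 1]
      nn_integral_path_energy_le[of G \<rho> K] K
    unfolding A_def B_def by (intro add_mono mult_left_mono) simp_all
  also have "\<dots> \<le> ennreal (8 * K) * ((\<integral>\<^sup>+y. ennreal ((f y)\<^sup>2) \<partial>lborel)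
      + (\<integral>\<^sup>+y. ennreal ((G y)\<^sup>2) \<partial>lborel))"
  proof -
    have "2 * ennreal K = ennreal (2 * K)" "2 * ennreal (4 * K) = ennreal (8 * K)"
      using K by (simp_all add: ennreal_mult)
    moreover have "ennreal (2 * K) \<le> ennreal (8 * K)" using K by (intro ennreal_leI) simp
    ultimately show ?thesis
      by (simp add: distrib_left mult.assoc[symmetric] add_mono mult_right_mono)
  qed
  also have "\<dots> = ennreal (8 * K) * (\<integral>\<^sup>+y. ennreal ((f y)\<^sup>2 + (G y)\<^sup>2) \<partial>lborel)"
    by (subst nn_integral_add[symmetric]) simp_all
  finally show ?thesis unfolding V_def G_def .
qed

lemma W_nonneg: "0 \<le> W r"
  unfolding W_def by simp

lemma ball_density_bound_potential:
  fixes f :: "real^'n::finite \<Rightarrow> real"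
  assumes eps: "eps > 0"
    and E: "\<forall>x. \<forall>R>0. energy eps f (ball x R) \<le> ennreal (K * R ^ (CARD('n) - 1))"
  shows "ball_density_bound (2 * \<bar>K\<bar>) (\<lambda>y. 2 * W (f y) / eps)"
  unfolding ball_density_bound_def
proof (intro allI impI)
  fix z and s :: real assume s: "s > 0"
  define e where "e y = eps / 2 * (norm (grad f y))\<^sup>2 + W (f y) / eps" for y
  have "(\<integral>\<^sup>+y. ennreal (2 * W (f y) / eps) * indicator (ball z s) y \<partial>lborel)
      \<le> (\<integral>\<^sup>+y. ennreal 2 * (ennreal (e y) * indicator (ball z s) y) \<partial>lborel)"
  proof (intro nn_integral_mono)
    fix y
    have "ennreal (2 * W (f y) / eps) \<le> ennreal (2 * e y)"
      unfolding e_def using eps by (intro ennreal_leI) simp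
    also have "\<dots> = ennreal 2 * ennreal (e y)"
      unfolding e_def using eps W_nonneg by (intro ennreal_mult) auto
    finally show "ennreal (2 * W (f y) / eps) * indicator (ball z s) y
        \<le> ennreal 2 * (ennreal (e y) * indicator (ball z s) y)"
      by (auto simp: indicator_def)
  qed
  also have "\<dots> \<le> ennreal 2 * energy eps f (ball z s)"
    unfolding energy_def e_def by (rule nn_integral_cmult_le) simp
  also have "\<dots> \<le> ennreal 2 * ennreal (\<bar>K\<bar> * s ^ (CARD('n) - 1))"
  proof (rule mult_left_mono)
    have "energy eps f (ball z s) \<le> ennreal (K * s ^ (CARD('n) - 1))" using E s by blast
    also have "\<dots> \<le> ennreal (\<bar>K\<bar> * s ^ (CARD('n) - 1))"
      using s by (intro ennreal_leI mult_right_mono) auto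
    finally show "energy eps f (ball z s) \<le> ennreal (\<bar>K\<bar> * s ^ (CARD('n) - 1))" .
  qed simp
  also have "\<dots> = ennreal (2 * \<bar>K\<bar> * s ^ (CARD('n) - 1))"
    unfolding mult.assoc by (rule ennreal_mult[symmetric]) (use s in auto)
  finally show "(\<integral>\<^sup>+y. ennreal (2 * W (f y) / eps) * indicator (ball z s) y \<partial>lborel)
      \<le> ennreal (2 * \<bar>K\<bar> * s ^ (CARD('n) - 1))" .
qed

lemma nn_integral_forcing_square_le:
  fixes f \<theta> :: "real^'n::finite \<Rightarrow> real"
  assumes eps: "eps > 0" and cf: "continuous_on UNIV f"
    and d: "\<forall>x. \<theta> differentiable (at x)" and cg: "continuous_on UNIV (grad \<theta>)"
    and E: "\<forall>x. \<forall>R>0. energy eps f (ball x R) \<le> ennreal (K * R ^ (CARD('n) - 1))"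
  shows "(\<integral>\<^sup>+x. ennreal ((1 / eps) * (\<theta> x * sqrt (2 * W (f x)))\<^sup>2) \<partial>lborel)
           \<le> ennreal (16 * \<bar>K\<bar> / measure lborel (ball (0::real^'n) 1))
             * (\<integral>\<^sup>+x. ennreal ((\<theta> x)\<^sup>2 + (norm (grad \<theta> x))\<^sup>2) \<partial>lborel)"
proof -
  define \<rho> where "\<rho> = (\<lambda>y. 2 * W (f y) / eps)"
  define V where "V = measure lborel (ball (0::real^'n) 1)"
  have V: "V > 0" unfolding V_def using content_ball_pos[of 1 "0::real^'n"] by simp
  have "continuous_on UNIV W" unfolding W_def[abs_def] by (intro continuous_intros) auto
  then have "continuous_on UNIV \<rho>"
    unfolding \<rho>_def using eps by (intro continuous_intros continuous_on_compose2[OF _ cf]) auto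
  then have "\<rho> \<in> borel_measurable borel" using borel_measurable_continuous_onI by blast
  from ball_density_trace_inequality[OF d cg this ball_density_bound_potential[OF eps E, folded \<rho>_def]]
  have trace: "ennreal V * (\<integral>\<^sup>+y. ennreal (\<rho> y * (\<theta> y)\<^sup>2) \<partial>lborel)
      \<le> ennreal (16 * \<bar>K\<bar>) * (\<integral>\<^sup>+y. ennreal ((\<theta> y)\<^sup>2 + (norm (grad \<theta> y))\<^sup>2) \<partial>lborel)"
    unfolding V_def by simp
  have inv_V: "ennreal (1 / V) * ennreal V = 1"
    using V by (simp add: ennreal_mult[symmetric])
  have "(\<integral>\<^sup>+x. ennreal ((1 / eps) * (\<theta> x * sqrt (2 * W (f x)))\<^sup>2) \<partial>lborel)
      = (\<integral>\<^sup>+y. ennreal (\<rho> y * (\<theta> y)\<^sup>2) \<partial>lborel)"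
  proof (rule nn_integral_cong)
    fix y
    have "(sqrt (2 * W (f y)))\<^sup>2 = 2 * W (f y)" using W_nonneg by simp
    then show "ennreal ((1 / eps) * (\<theta> y * sqrt (2 * W (f y)))\<^sup>2) = ennreal (\<rho> y * (\<theta> y)\<^sup>2)"
      unfolding \<rho>_def power_mult_distrib by (simp add: mult.commute)
  qed
  also have "\<dots> = ennreal (1 / V) * (ennreal V * (\<integral>\<^sup>+y. ennreal (\<rho> y * (\<theta> y)\<^sup>2) \<partial>lborel))"
    by (simp add: mult.assoc[symmetric] inv_V)
  also have "\<dots> \<le> ennreal (1 / V) * (ennreal (16 * \<bar>K\<bar>)
      * (\<integral>\<^sup>+y. ennreal ((\<theta> y)\<^sup>2 + (norm (grad \<theta> y))\<^sup>2) \<partial>lborel))"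
    using trace by (rule mult_left_mono) simp
  also have "\<dots> = ennreal (16 * \<bar>K\<bar> / V)
      * (\<integral>\<^sup>+y. ennreal ((\<theta> y)\<^sup>2 + (norm (grad \<theta> y))\<^sup>2) \<partial>lborel)"
    using V by (simp add: mult.assoc[symmetric] ennreal_mult[symmetric] divide_inverse mult.commute)
  finally show ?thesis unfolding V_def .
qed

lemma classical_solution_continuous_slice:
  assumes "classical_solution T eps u u0 g" and t: "t \<in> {0..<T}"
  shows "continuous_on UNIV (u t)"
proof -
  have "continuous_on ({0..<T} \<times> UNIV) (\<lambda>(t, x). u t x)"
    using assms unfolding classical_solution_def by blast
  then have "continuous_on UNIV (\<lambda>x. (\<lambda>(t, x). u t x) (t, x))"
    by (rule continuous_on_compose2) (use t in \<open>auto intro!: continuous_on_Pair continuous_on_const continuous_on_id\<close>)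
  then show ?thesis by simp
qed

theorem proposition5p6:
  fixes T :: real
    and u theta :: "real \<Rightarrow> real \<Rightarrow> real^'n::finite \<Rightarrow> real"
    and u0 :: "real \<Rightarrow> real^'n \<Rightarrow> real"
  defines "g \<equiv> (\<lambda>eps t x. theta eps t x * sqrt (2 * W (u eps t x)))"
  assumes T_pos: "T > 0"
    and theta_C1: "\<forall>eps>0. \<forall>t\<in>{0<..<T}.
          (\<forall>x. theta eps t differentiable (at x)) \<and> continuous_on UNIV (grad (theta eps t))"
    and theta_bound: "(SUP eps\<in>{0<..}. \<integral>\<^sup>+ t\<in>{0<..<T}. \<integral>\<^sup>+ x.
          ennreal ((theta eps t x)\<^sup>2 + (norm (grad (theta eps t) x))\<^sup>2) \<partial>lborel \<partial>lborel) < \<infinity>"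
    and sol: "\<forall>eps>0. classical_solution T eps (u eps) (u0 eps) (g eps)"
    and u0_diff: "\<forall>eps>0. \<forall>x. u0 eps differentiable (at x)"
    and init_energy: "(SUP eps\<in>{0<..}. energy eps (u0 eps) UNIV) < \<infinity>"
    and density: "\<exists>K. \<forall>eps>0. \<forall>t\<in>{0..<T}. \<forall>x. \<forall>R>0.
          energy eps (u eps t) (ball x R) \<le> ennreal (K * R ^ (CARD('n) - 1))"
  shows "(SUP eps\<in>{0<..}. \<integral>\<^sup>+ t\<in>{0<..<T}. \<integral>\<^sup>+ x.
          ennreal ((1 / eps) * (g eps t x)\<^sup>2) \<partial>lborel \<partial>lborel) < \<infinity>"
proof -
  obtain K where K: "\<forall>eps>0. \<forall>t\<in>{0..<T}. \<forall>x. \<forall>R>0.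
      energy eps (u eps t) (ball x R) \<le> ennreal (K * R ^ (CARD('n) - 1))"
    using density by blast
  define c where "c = 16 * \<bar>K\<bar> / measure lborel (ball (0::real^'n) 1)"
  have "(\<integral>\<^sup>+ x. ennreal ((1 / eps) * (g eps t x)\<^sup>2) \<partial>lborel)
      \<le> ennreal c * (\<integral>\<^sup>+ x. ennreal ((theta eps t x)\<^sup>2 + (norm (grad (theta eps t) x))\<^sup>2) \<partial>lborel)"
    if "eps \<in> {0<..}" "t \<in> {0<..<T}" for eps t
  proof -
    have "continuous_on UNIV (u eps t)"
      using sol that by (intro classical_solution_continuous_slice[of T eps "u eps"]) auto
    moreover have "\<forall>x. \<forall>R>0. energy eps (u eps t) (ball x R) \<le> ennreal (K * R ^ (CARD('n) - 1))"
      using K that by simp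
    ultimately show ?thesis
      unfolding g_def c_def using that theta_C1 by (intro nn_integral_forcing_square_le) auto
  qed
  then have "(SUP eps\<in>{0<..}. \<integral>\<^sup>+ t\<in>{0<..<T}. \<integral>\<^sup>+ x.
        ennreal ((1 / eps) * (g eps t x)\<^sup>2) \<partial>lborel \<partial>lborel)
      \<le> ennreal c * (SUP eps\<in>{0<..}. \<integral>\<^sup>+ t\<in>{0<..<T}. \<integral>\<^sup>+ x.
        ennreal ((theta eps t x)\<^sup>2 + (norm (grad (theta eps t) x))\<^sup>2) \<partial>lborel \<partial>lborel)"
  proof (rule SUP_set_nn_integral_le_cmult)
    show "0 \<le> c" unfolding c_def by simp
  qed
  also have "\<dots> < \<infinity>"
    using theta_bound by (simp add: ennreal_mult_less_top)
  finally show ?thesis .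
qed

end
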